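(* Let $M\ge 2$, $\epsilon>0$, and rates $R_1,\dots,R_M>0$ with order statistics $R_{(1)}\le\dots\le R_{(M)}$, so $R_{(M)}=\max\{R_1,\dots,R_M\}$; set $R_{key}=\sum_{i=1}^{M-1}R_{(i)}$. Let $W_1,\dots,W_M$ be independent with $W_i$ uniform on $\mathcal W_i=\{1,\dots,2^{nR_i}\}$, and $W^M=(W_1,\dots,W_M)$. Let $\mathcal C$ be a random codebook obtained by partitioning $\mathcal W^M=\mathcal W_1\times\dots\times\mathcal W_M$ uniformly at random into $2^{n(R_{key}-\epsilon)}$ bins, each containing $2^{n(R_{(M)}+\epsilon)}$ elements (independently of $W^M$), and let $K_A$ be the index of the bin containing $W^M$. Then for every $m\in\{1,\dots,M\}$ and all sufficiently large $n$, $$H(W^M\mid W_m,K_A,\mathcal C)\le n\big(R_{(M)}-R_m+\delta(\epsilon)\big),$$ where $\delta(\epsilon)\to0$ as $\epsilon\to0$.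
   Context: Conditioning on $\mathcal C$ means the entropy is averaged over the random choice of the binning codebook. Exponents such as $2^{nR_i}$ are treated as integers (rounding as needed). *)

theory Defs
  imports "HOL-Probability.Probability" "HOL-Library.FuncSet"
begin

definition cond_entropy :: "'a pmf \<Rightarrow> ('a \<Rightarrow> 'b) \<Rightarrow> ('a \<Rightarrow> 'c) \<Rightarrow> real" where
  "cond_entropy p X Y =
     measure_pmf.expectation p (\<lambda>\<omega>.
        - log 2 (measure_pmf.prob p {\<omega>'. X \<omega>' = X \<omega> \<and> Y \<omega>' = Y \<omega>}
                 / measure_pmf.prob p {\<omega>'. Y \<omega>' = Y \<omega>}))"

definition ord_stat :: "nat \<Rightarrow> (nat \<Rightarrow> real) \<Rightarrow> nat \<Rightarrow> real" where
  "ord_stat M R i = sort (map R [1..<M+1]) ! (i - 1)"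

definition R_key :: "nat \<Rightarrow> (nat \<Rightarrow> real) \<Rightarrow> real" where
  "R_key M R = (\<Sum>i=1..M-1. ord_stat M R i)"

definition alph_size :: "(nat \<Rightarrow> real) \<Rightarrow> nat \<Rightarrow> nat \<Rightarrow> nat" where
  "alph_size R n i = nat \<lceil>2 powr (real n * R i)\<rceil>"

definition msg_set :: "nat \<Rightarrow> (nat \<Rightarrow> real) \<Rightarrow> nat \<Rightarrow> (nat \<Rightarrow> nat) set" where
  "msg_set M R n = (\<Pi>\<^sub>E i\<in>{1..M}. {1..alph_size R n i})"

definition num_bins :: "nat \<Rightarrow> (nat \<Rightarrow> real) \<Rightarrow> real \<Rightarrow> nat \<Rightarrow> nat" where
  "num_bins M R \<epsilon> n = nat \<lceil>2 powr (real n * (R_key M R - \<epsilon>))\<rceil>"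

text \<open>Binning codebooks: assignments of every message tuple to one of the bins
  0, ..., B-1, all bins having (as nearly as possible) equal size |W^M| / B,
  i.e. 2^(n(R_(M)+eps)) up to rounding.\<close>
definition codebooks :: "nat \<Rightarrow> (nat \<Rightarrow> real) \<Rightarrow> real \<Rightarrow> nat \<Rightarrow> ((nat \<Rightarrow> nat) \<Rightarrow> nat) set" where
  "codebooks M R \<epsilon> n =
     (let W = msg_set M R n; B = num_bins M R \<epsilon> n
      in {f \<in> W \<rightarrow>\<^sub>E {..<B}. \<forall>k<B.
            card W div B \<le> card {w \<in> W. f w = k} \<and>
            card {w \<in> W. f w = k} \<le> card W div B + 1})"

text \<open>Joint distribution of (W^M, C): W^M uniform on W^M (i.e. independent uniform
  components), C a uniformly random codebook, independent of W^M.\<close>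
definition joint_dist :: "nat \<Rightarrow> (nat \<Rightarrow> real) \<Rightarrow> real \<Rightarrow> nat \<Rightarrow> ((nat \<Rightarrow> nat) \<times> ((nat \<Rightarrow> nat) \<Rightarrow> nat)) pmf" where
  "joint_dist M R \<epsilon> n = pair_pmf (pmf_of_set (msg_set M R n)) (pmf_of_set (codebooks M R \<epsilon> n))"

text \<open>H(W^M | W_m, K_A, C) where K_A = C(W^M) is the bin index of W^M.\<close>
definition binning_entropy :: "nat \<Rightarrow> (nat \<Rightarrow> real) \<Rightarrow> real \<Rightarrow> nat \<Rightarrow> nat \<Rightarrow> real" where
  "binning_entropy M R \<epsilon> n m =
     cond_entropy (joint_dist M R \<epsilon> n) (\<lambda>(w, C). w) (\<lambda>(w, C). (w m, C w, C))"

end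

theory Submission
  imports Defs "HOL-Real_Asymp.Real_Asymp"
begin

text \<open>Given \<open>W\<^sub>m\<close>, the bin index and the codebook, \<open>W\<^sup>M\<close> is uniform on the messages that agree
  with it in coordinate \<open>m\<close> and lie in its bin, so by concavity of \<open>log\<close> the entropy is at most
  the \<open>log\<close> of the expected size of that set. A message other than \<open>W\<^sup>M\<close> lands in the bin of
  \<open>W\<^sup>M\<close> with probability at most \<open>2/B\<close>: by symmetry this probability is the same for all pairs
  of distinct messages, and every balanced binning has at most \<open>|W|\<lfloor>|W|/B\<rfloor>\<close> colliding
  ordered pairs. The expected size is thus at most
  \<open>1 + 2\<prod>\<^sub>i\<^sub>\<noteq>\<^sub>m|W\<^sub>i|/B \<le> 2\<^bsup>M+1+n(R\<^sub>(\<^sub>M\<^sub>) - R\<^sub>m + \<epsilon>)\<^esup>\<close>, and the additive constant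
  \<open>M + 1\<close> is absorbed into a further \<open>n\<epsilon>\<close> for large \<open>n\<close>.\<close>

lemma card_Collect_eq_sum: "finite A \<Longrightarrow> card {x\<in>A. P x} = (\<Sum>x\<in>A. if P x then 1 else 0 :: nat)"
  using sum.inter_filter[of A "\<lambda>_. 1::nat" P] by simp

lemma sum_card_Collect_swap:
  assumes "finite A" "finite B"
  shows "(\<Sum>x\<in>A. card {y\<in>B. P x y}) = (\<Sum>y\<in>B. card {x\<in>A. P x y})"
  using assms by (simp add: card_Collect_eq_sum sum.swap[of _ A])

lemma card_Collect_bij_betw:
  assumes "bij_betw h A A'"
  shows "card {x\<in>A. P (h x)} = card {y\<in>A'. P y}"
proof -
  have "h ` {x\<in>A. P (h x)} = {y\<in>A'. P y}"
    using assms by (auto simp: bij_betw_def)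
  moreover have "inj_on h {x\<in>A. P (h x)}"
    using assms by (auto simp: bij_betw_def intro: inj_on_subset)
  ultimately show ?thesis
    by (metis card_image)
qed

lemma card_Collect_mod_eq:
  assumes "k < B"
  shows "card {j\<in>{0..<N}. j mod B = k} = N div B + (if k < N mod B then 1 else 0)"
proof (induction N)
  case 0
  then show ?case by simp
next
  case (Suc N)
  have "{j\<in>{0..<Suc N}. j mod B = k} = {j\<in>{0..<N}. j mod B = k} \<union> (if N mod B = k then {N} else {})"
    by (auto simp: less_Suc_eq)
  then have "card {j\<in>{0..<Suc N}. j mod B = k} = card {j\<in>{0..<N}. j mod B = k} + (if N mod B = k then 1 else 0)"
    by (auto simp: card_insert_if)
  with Suc.IH assms mod_less_divisor[of B N] show ?case
    by (auto simp: div_Suc mod_Suc)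
qed

lemma exists_bij_betw_pair:
  assumes "a \<in> W" "b \<in> W" "c \<in> W" "d \<in> W" "a \<noteq> b" "c \<noteq> d"
  shows "\<exists>\<pi>. bij_betw \<pi> W W \<and> \<pi> a = c \<and> \<pi> b = d"
proof -
  define v where "v = Transposition.transpose a c b"
  define \<pi> where "\<pi> = Transposition.transpose v d \<circ> Transposition.transpose a c"
  have "v \<in> W" "v \<noteq> c"
    using assms by (auto simp: v_def Transposition.transpose_def)
  then have "bij_betw \<pi> W W"
    unfolding \<pi>_def using assms by (intro bij_betw_trans[of _ W W]) auto
  moreover have "\<pi> a = c" "\<pi> b = d"
    using \<open>v \<noteq> c\<close> assms(5,6) by (auto simp: \<pi>_def v_def)
  ultimately show ?thesis by blast
qed

subsection \<open>Balanced binnings\<close>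

definition balanced_maps :: "'a set \<Rightarrow> nat \<Rightarrow> ('a \<Rightarrow> nat) set" where
  "balanced_maps W B = {f \<in> W \<rightarrow>\<^sub>E {..<B}. \<forall>k<B.
     card W div B \<le> card {w\<in>W. f w = k} \<and> card {w\<in>W. f w = k} \<le> card W div B + 1}"

lemma codebooks_eq_balanced_maps:
  "codebooks M R \<epsilon> n = balanced_maps (msg_set M R n) (num_bins M R \<epsilon> n)"
  by (simp add: codebooks_def balanced_maps_def Let_def)

lemma finite_balanced_maps: "finite W \<Longrightarrow> finite (balanced_maps W B)"
  by (rule finite_subset[OF _ finite_PiE[of W "\<lambda>_. {..<B}"]]) (auto simp: balanced_maps_def)

lemma balanced_maps_nonempty:
  assumes "finite W" "B > 0"
  shows "balanced_maps W B \<noteq> {}"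
proof -
  obtain g where g: "bij_betw g W {0..<card W}"
    using ex_bij_betw_finite_nat[OF assms(1)] by blast
  define f where "f = restrict (\<lambda>w. g w mod B) W"
  have "card {w\<in>W. f w = k} = card W div B + (if k < card W mod B then 1 else 0)"
    if "k < B" for k
  proof -
    have "{w\<in>W. f w = k} = {w\<in>W. g w mod B = k}"
      by (auto simp: f_def)
    then show ?thesis
      using card_Collect_bij_betw[OF g, of "\<lambda>j. j mod B = k"] card_Collect_mod_eq[OF that] by simp
  qed
  then have "f \<in> balanced_maps W B"
    using assms(2) by (auto simp: balanced_maps_def f_def)
  then show ?thesis
    by auto
qed

lemma bij_betw_balanced_maps_comp:
  assumes fin: "finite W" and \<pi>: "bij_betw \<pi> W W"
  shows "bij_betw (\<lambda>C. restrict (C \<circ> \<pi>) W) (balanced_maps W B) (balanced_maps W B)"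
proof -
  let ?\<Phi> = "\<lambda>C. restrict (C \<circ> \<pi>) W"
  have \<pi>W: "\<pi> w \<in> W" if "w \<in> W" for w
    using \<pi> that by (auto simp: bij_betw_def)
  have maps: "?\<Phi> C \<in> balanced_maps W B" if "C \<in> balanced_maps W B" for C
  proof -
    have "{w\<in>W. ?\<Phi> C w = k} = {w\<in>W. C (\<pi> w) = k}" for k
      by auto
    then show ?thesis
      using that \<pi>W card_Collect_bij_betw[OF \<pi>, of "\<lambda>x. C x = _"]
      by (auto simp: balanced_maps_def PiE_iff)
  qed
  have "inj_on ?\<Phi> (balanced_maps W B)"
  proof (rule inj_onI, rule ext)
    fix C D x
    assume C: "C \<in> balanced_maps W B" and D: "D \<in> balanced_maps W B" and eq: "?\<Phi> C = ?\<Phi> D"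
    show "C x = D x"
    proof (cases "x \<in> W")
      case True
      then obtain y where "y \<in> W" "x = \<pi> y"
        using \<pi> by (auto simp: bij_betw_def)
      then show ?thesis
        using fun_cong[OF eq, of y] by simp
    next
      case False
      then show ?thesis
        using C D by (auto simp: balanced_maps_def PiE_def extensional_def)
    qed
  qed
  moreover from this maps have "?\<Phi> ` balanced_maps W B = balanced_maps W B"
    by (intro endo_inj_surj[OF finite_balanced_maps[OF fin]]) auto
  ultimately show ?thesis
    by (simp add: bij_betw_def)
qed

lemma card_collisions_eq:
  assumes fin: "finite W" and "a \<in> W" "b \<in> W" "c \<in> W" "d \<in> W" "a \<noteq> b" "c \<noteq> d"
  shows "card {C\<in>balanced_maps W B. C a = C b} = card {C\<in>balanced_maps W B. C c = C d}"
proof -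
  obtain \<pi> where \<pi>: "bij_betw \<pi> W W" "\<pi> a = c" "\<pi> b = d"
    using exists_bij_betw_pair[OF assms(2-7)] by blast
  show ?thesis
    using card_Collect_bij_betw[OF bij_betw_balanced_maps_comp[OF fin \<pi>(1)],
        where P = "\<lambda>C. C a = C b"] assms(2,3) \<pi>(2,3)
    by simp
qed

lemma card_bin_others_le:
  assumes "finite W" "C \<in> balanced_maps W B" "w \<in> W"
  shows "card {w'\<in>W - {w}. C w' = C w} \<le> card W div B"
proof -
  have "card {w'\<in>W. C w' = C w} \<le> card W div B + 1"
    using assms(2,3) by (auto simp: balanced_maps_def)
  moreover have "{w'\<in>W - {w}. C w' = C w} = {w'\<in>W. C w' = C w} - {w}"
    by auto
  ultimately show ?thesis
    using assms(1,3) by (simp add: card_Diff_singleton)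
qed

text \<open>Double counting of colliding ordered pairs: every pair of distinct messages collides in the
  same number \<open>T\<close> of codebooks, and each codebook has at most \<open>|W| \<lfloor>|W|/B\<rfloor>\<close> such pairs.\<close>
lemma card_collisions_le:
  assumes fin: "finite W" and B: "B > 0" and "a \<in> W" "b \<in> W" "a \<noteq> b"
  shows "card {C\<in>balanced_maps W B. C a = C b} * B \<le> 2 * card (balanced_maps W B)"
proof -
  define CB where "CB = balanced_maps W B"
  define T where "T = card {C\<in>CB. C a = C b}"
  have finCB: "finite CB"
    unfolding CB_def using finite_balanced_maps[OF fin] .
  have W2: "card W \<ge> 2"
    using card_mono[OF fin, of "{a, b}"] assms(3-5) by simp
  have "card W * (card W - 1) * T = (\<Sum>w\<in>W. \<Sum>w'\<in>W - {w}. T)"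
    using fin by (simp add: card_Diff_singleton)
  also have "\<dots> = (\<Sum>w\<in>W. \<Sum>w'\<in>W - {w}. card {C\<in>CB. C w' = C w})"
    using card_collisions_eq[OF fin _ _ assms(3,4) _ assms(5)]
    by (intro sum.cong refl) (auto simp: T_def CB_def)
  also have "\<dots> = (\<Sum>C\<in>CB. \<Sum>w\<in>W. card {w'\<in>W - {w}. C w' = C w})"
    using fin finCB sum_card_Collect_swap[of "W - _" CB]
    by (simp add: sum.swap[of _ CB])
  also have "\<dots> \<le> (\<Sum>C\<in>CB. \<Sum>w\<in>W. card W div B)"
    by (intro sum_mono card_bin_others_le[OF fin]) (auto simp: CB_def)
  finally have "(card W - 1) * T \<le> card CB * (card W div B)"
    using W2 by (simp add: ac_simps)
  then have "(card W - 1) * (T * B) \<le> card CB * (card W div B * B)"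
    by (metis mult.assoc mult_le_mono1)
  also have "\<dots> \<le> card CB * (2 * (card W - 1))"
    using W2 div_times_less_eq_dividend[of "card W" B] by (intro mult_left_mono) linarith+
  finally have "T * B \<le> 2 * card CB"
    using W2 by (simp add: ac_simps)
  then show ?thesis
    by (simp add: T_def CB_def)
qed

lemma sum_card_bin_fiber_le:
  assumes fin: "finite W" and B: "B > 0"
    and F: "\<And>w. w \<in> W \<Longrightarrow> card {w'\<in>W. key w' = key w} \<le> F"
  shows "(\<Sum>(w, C)\<in>W \<times> balanced_maps W B. real (card {w'\<in>W. key w' = key w \<and> C w' = C w}))
     \<le> real (card W) * real (card (balanced_maps W B)) * (1 + 2 * F / B)"
proof -
  define CB where "CB = balanced_maps W B"
  define K where "K w = {w'\<in>W. key w' = key w}" for w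
  have finCB: "finite CB"
    unfolding CB_def using finite_balanced_maps[OF fin] .
  have finK: "finite (K w)" for w
    using fin by (simp add: K_def)
  have collisions: "real (card {C\<in>CB. C w' = C w}) \<le> 2 * card CB / B"
    if "w \<in> W" "w' \<in> W" "w' \<noteq> w" for w w'
    using card_collisions_le[OF fin B that(2,1,3)] B
    by (simp add: CB_def le_divide_eq flip: of_nat_mult)
  have "(\<Sum>(w, C)\<in>W \<times> CB. card {w'\<in>W. key w' = key w \<and> C w' = C w})
      = (\<Sum>w\<in>W. \<Sum>C\<in>CB. card {w'\<in>K w. C w' = C w})"
    by (simp add: sum.cartesian_product K_def conj_assoc)
  also have "\<dots> = (\<Sum>w\<in>W. \<Sum>w'\<in>K w. card {C\<in>CB. C w' = C w})"
    using sum_card_Collect_swap[OF finCB finK] by simp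
  finally have "(\<Sum>(w, C)\<in>W \<times> CB. real (card {w'\<in>W. key w' = key w \<and> C w' = C w}))
      = (\<Sum>w\<in>W. \<Sum>w'\<in>K w. real (card {C\<in>CB. C w' = C w}))"
    by (simp add: split_beta flip: of_nat_sum)
  also have "\<dots> \<le> (\<Sum>w\<in>W. card CB + F * (2 * card CB / B))"
  proof (rule sum_mono)
    fix w
    assume w: "w \<in> W"
    have "card (K w - {w}) \<le> F"
      using F[OF w] card_mono[OF finK Diff_subset, of w "{w}"] by (simp add: K_def)
    then have "card (K w - {w}) * (2 * card CB / B) \<le> F * (2 * card CB / B)"
      by (intro mult_right_mono) auto
    moreover have "(\<Sum>w'\<in>K w - {w}. real (card {C\<in>CB. C w' = C w}))
        \<le> card (K w - {w}) * (2 * card CB / B)"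
      using sum_mono[of "K w - {w}" _ "\<lambda>_. 2 * card CB / B"] collisions w
      by (auto simp: K_def)
    moreover have "w \<in> K w"
      using w by (simp add: K_def)
    ultimately show "(\<Sum>w'\<in>K w. real (card {C\<in>CB. C w' = C w})) \<le> card CB + F * (2 * card CB / B)"
      by (simp add: sum.remove[OF finK])
  qed
  also have "\<dots> = real (card W) * real (card CB) * (1 + 2 * F / B)"
    by (simp add: algebra_simps)
  finally show ?thesis
    by (simp add: CB_def)
qed

subsection \<open>Conditional entropy under a uniform distribution\<close>

lemma pair_pmf_of_set:
  assumes "finite A" "A \<noteq> {}" "finite B" "B \<noteq> {}"
  shows "pair_pmf (pmf_of_set A) (pmf_of_set B) = pmf_of_set (A \<times> B)"
proof (rule pmf_eqI)
  fix x :: "'a \<times> 'b"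
  show "pmf (pair_pmf (pmf_of_set A) (pmf_of_set B)) x = pmf (pmf_of_set (A \<times> B)) x"
    using assms by (cases x) (simp add: pmf_pair card_cartesian_product indicator_def)
qed

lemma cond_entropy_pmf_of_set:
  assumes S: "finite S" "S \<noteq> {}" and inj: "inj_on (\<lambda>\<omega>. (X \<omega>, Y \<omega>)) S"
  shows "cond_entropy (pmf_of_set S) X Y = (\<Sum>x\<in>S. log 2 (card {x'\<in>S. Y x' = Y x})) / card S"
proof -
  have "- log 2 (measure_pmf.prob (pmf_of_set S) {\<omega>. X \<omega> = X x \<and> Y \<omega> = Y x}
                  / measure_pmf.prob (pmf_of_set S) {\<omega>. Y \<omega> = Y x})
        = log 2 (card {x'\<in>S. Y x' = Y x})" (is "?h x = _") if x: "x \<in> S" for x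
  proof -
    have "S \<inter> {\<omega>. X \<omega> = X x \<and> Y \<omega> = Y x} = {x}"
      using inj x by (auto simp: inj_on_def)
    then have joint: "measure_pmf.prob (pmf_of_set S) {\<omega>. X \<omega> = X x \<and> Y \<omega> = Y x} = 1 / card S"
      using S by (simp add: measure_pmf_of_set)
    have "S \<inter> {\<omega>. Y \<omega> = Y x} = {x'\<in>S. Y x' = Y x}"
      by auto
    then have marginal: "measure_pmf.prob (pmf_of_set S) {\<omega>. Y \<omega> = Y x} = card {x'\<in>S. Y x' = Y x} / card S"
      using S by (simp add: measure_pmf_of_set)
    have "card {x'\<in>S. Y x' = Y x} > 0" "card S > 0"
      using S x by (auto simp: card_gt_0_iff)
    then show ?thesis
      by (simp add: joint marginal log_divide)
  qed
  then have "sum ?h S = (\<Sum>x\<in>S. log 2 (card {x'\<in>S. Y x' = Y x}))"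
    by (rule sum.cong[OF refl])
  then show ?thesis
    unfolding cond_entropy_def integral_pmf_of_set[OF S(2,1)] by simp
qed

lemma mean_log_le_log:
  fixes f :: "'a \<Rightarrow> real"
  assumes S: "finite S" "S \<noteq> {}" and f: "\<And>x. x \<in> S \<Longrightarrow> f x > 0"
    and mean: "(\<Sum>x\<in>S. f x) / card S \<le> U"
  shows "(\<Sum>x\<in>S. log 2 (f x)) / card S \<le> log 2 U"
proof -
  have c: "real (card S) > 0"
    using S by (simp add: card_gt_0_iff)
  have "(\<Sum>x\<in>S. log 2 (f x)) / card S = (\<Sum>x\<in>S. 1 / card S * log 2 (f x))"
    by (simp add: sum_divide_distrib)
  also have "\<dots> \<le> log 2 (\<Sum>x\<in>S. (1 / card S) *\<^sub>R f x)"
    using S f c by (intro concave_on_sum[of S "{0<..}" "log 2" "\<lambda>_. 1 / card S" f] log_concave) auto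
  also have "\<dots> \<le> log 2 U"
  proof -
    have "(\<Sum>x\<in>S. (1 / card S) *\<^sub>R f x) = (\<Sum>x\<in>S. f x) / card S"
      by (simp add: sum_divide_distrib)
    moreover have "(\<Sum>x\<in>S. f x) / card S > 0"
      using S f c by (intro divide_pos_pos sum_pos) auto
    ultimately show ?thesis
      using mean by simp
  qed
  finally show ?thesis .
qed

lemma le_ord_stat_max:
  assumes "m \<in> {1..M}"
  shows "R m \<le> ord_stat M R M"
proof -
  define xs where "xs = sort (map R [1..<M+1])"
  have "R m \<in> set xs"
    unfolding xs_def set_sort set_map using assms by (intro imageI) auto
  then obtain j where j: "j < M" "xs ! j = R m"
    by (metis in_set_conv_nth length_map length_sort length_upt add_diff_cancel_right' xs_def)
  then have "xs ! j \<le> xs ! (M - 1)"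
    by (intro sorted_nth_mono) (auto simp: xs_def)
  then show ?thesis
    using j by (simp add: ord_stat_def xs_def)
qed

lemma R_key_add_ord_stat_max:
  assumes "M \<ge> 1"
  shows "R_key M R + ord_stat M R M = (\<Sum>i\<in>{1..M}. R i)"
proof -
  define xs where "xs = sort (map R [1..<M+1])"
  have "R_key M R = (\<Sum>j<M-1. xs ! j)"
    unfolding R_key_def ord_stat_def xs_def
    by (rule sum.reindex_bij_witness[where i="\<lambda>j. j + 1" and j="\<lambda>i. i - 1"]) auto
  then have "R_key M R + ord_stat M R M = (\<Sum>j<M. xs ! j)"
    using assms by (cases M) (simp_all add: ord_stat_def xs_def)
  also have "\<dots> = sum_list xs"
  proof -
    have "length xs = M"
      by (simp add: xs_def)
    then show ?thesis
      by (simp only: sum_list_sum_nth atLeast0LessThan)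
  qed
  also have "\<dots> = sum_list (map R [1..<M+1])"
    unfolding xs_def by (metis mset_sort sum_mset_sum_list)
  also have "\<dots> = (\<Sum>i\<in>{1..M}. R i)"
    by (simp only: interv_sum_list_conv_sum_set_nat set_upt atLeastLessThanSuc_atLeastAtMost Suc_eq_plus1[symmetric])
  finally show ?thesis .
qed

lemma alph_size_le:
  assumes "R i \<ge> 0"
  shows "real (alph_size R n i) \<le> 2 * 2 powr (real n * R i)"
proof -
  have "1 \<le> 2 powr (real n * R i)"
    using assms by (intro ge_one_powr_ge_zero) auto
  moreover from this have "real (alph_size R n i) = of_int \<lceil>2 powr (real n * R i)\<rceil>"
    unfolding alph_size_def by simp
  ultimately show ?thesis
    by linarith
qed

lemma finite_msg_set: "finite (msg_set M R n)"
  by (simp add: msg_set_def finite_PiE)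

lemma msg_set_nonempty: "msg_set M R n \<noteq> {}"
proof -
  have "alph_size R n i \<ge> 1" for i
  proof -
    have "0 < \<lceil>2 powr (real n * R i)\<rceil>"
      by simp
    then show ?thesis
      unfolding alph_size_def by linarith
  qed
  then have "(\<lambda>i\<in>{1..M}. 1) \<in> msg_set M R n"
    by (simp add: msg_set_def)
  then show ?thesis
    by blast
qed

lemma card_msg_set_fiber_le:
  assumes "m \<in> {1..M}"
  shows "card {w\<in>msg_set M R n. w m = c} \<le> (\<Prod>i\<in>{1..M} - {m}. alph_size R n i)"
proof -
  let ?I = "{1..M} - {m}"
  have "inj_on (\<lambda>w. restrict w ?I) {w\<in>msg_set M R n. w m = c}"
  proof (rule inj_onI, rule ext)
    fix w w' i
    assume w: "w \<in> {w\<in>msg_set M R n. w m = c}" and w': "w' \<in> {w\<in>msg_set M R n. w m = c}"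
      and eq: "restrict w ?I = restrict w' ?I"
    show "w i = w' i"
    proof (cases "i \<in> {1..M}")
      case True
      then show ?thesis
        using fun_cong[OF eq, of i] w w' by (cases "i = m") auto
    next
      case False
      with w w' show ?thesis
        unfolding msg_set_def by (simp add: PiE_def extensional_def)
    qed
  qed
  moreover have "(\<lambda>w. restrict w ?I) ` {w\<in>msg_set M R n. w m = c} \<subseteq> (\<Pi>\<^sub>E i\<in>?I. {1..alph_size R n i})"
  proof (rule image_subsetI)
    fix w
    assume "w \<in> {w\<in>msg_set M R n. w m = c}"
    then have "\<forall>i\<in>?I. w i \<in> {1..alph_size R n i}"
      by (simp add: msg_set_def PiE_iff)
    then show "restrict w ?I \<in> (\<Pi>\<^sub>E i\<in>?I. {1..alph_size R n i})"
      by (simp add: restrict_PiE_iff)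
  qed
  moreover have "finite (\<Pi>\<^sub>E i\<in>?I. {1..alph_size R n i})"
    by (rule finite_PiE) auto
  ultimately have "card {w\<in>msg_set M R n. w m = c} \<le> card (\<Pi>\<^sub>E i\<in>?I. {1..alph_size R n i})"
    by (rule card_inj_on_le)
  then show ?thesis
    by (simp add: card_PiE)
qed

lemma prod_alph_size_le:
  assumes m: "m \<in> {1..M}" and R: "\<forall>i\<in>{1..M}. R i \<ge> 0"
  shows "real (\<Prod>i\<in>{1..M} - {m}. alph_size R n i)
    \<le> 2 powr (real M - 1) * 2 powr (real n * (R_key M R + ord_stat M R M - R m))"
proof -
  let ?I = "{1..M} - {m}"
  have "real (\<Prod>i\<in>?I. alph_size R n i) \<le> (\<Prod>i\<in>?I. 2 * 2 powr (real n * R i))"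
    using R by (auto intro!: prod_mono alph_size_le)
  also have "\<dots> = 2 ^ card ?I * 2 powr (real n * (\<Sum>i\<in>?I. R i))"
    by (simp add: prod.distrib sum_distrib_left powr_sum)
  also have "\<dots> = 2 powr (real M - 1) * 2 powr (real n * (R_key M R + ord_stat M R M - R m))"
    using m R_key_add_ord_stat_max[of M R]
    by (simp add: sum_diff1 of_nat_diff powr_realpow[symmetric])
  finally show ?thesis .
qed

lemma num_bins_ge: "2 powr (real n * (R_key M R - \<epsilon>)) \<le> real (num_bins M R \<epsilon> n)"
  unfolding num_bins_def by linarith

lemma num_bins_pos: "num_bins M R \<epsilon> n > 0"
  by (simp add: num_bins_def)

lemma binning_entropy_eq_mean_log:
  fixes M n :: nat and R :: "nat \<Rightarrow> real" and \<epsilon> :: real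
  defines "W \<equiv> msg_set M R n" and "CB \<equiv> codebooks M R \<epsilon> n"
  shows "binning_entropy M R \<epsilon> n m
    = (\<Sum>(w, C)\<in>W \<times> CB. log 2 (card {w'\<in>W. w' m = w m \<and> C w' = C w})) / card (W \<times> CB)"
proof -
  have W: "finite W" "W \<noteq> {}"
    unfolding W_def by (rule finite_msg_set, rule msg_set_nonempty)
  have CB: "finite CB" "CB \<noteq> {}"
    unfolding CB_def codebooks_eq_balanced_maps
    by (rule finite_balanced_maps[OF finite_msg_set], rule balanced_maps_nonempty[OF finite_msg_set num_bins_pos])
  have fiber: "card {x\<in>W \<times> CB. (case x of (w', C') \<Rightarrow> (w' m, C' w', C')) = (w m, C w, C)}
      = card {w'\<in>W. w' m = w m \<and> C w' = C w}" if "C \<in> CB" for w C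
  proof -
    have "{x\<in>W \<times> CB. (case x of (w', C') \<Rightarrow> (w' m, C' w', C')) = (w m, C w, C)}
        = (\<lambda>w'. (w', C)) ` {w'\<in>W. w' m = w m \<and> C w' = C w}"
      using that by auto
    then show ?thesis
      by (simp add: card_image inj_on_def)
  qed
  have "binning_entropy M R \<epsilon> n m
      = cond_entropy (pmf_of_set (W \<times> CB)) (\<lambda>(w, C). w) (\<lambda>(w, C). (w m, C w, C))"
    using pair_pmf_of_set[OF W CB] by (simp add: binning_entropy_def joint_dist_def W_def CB_def)
  also have "\<dots> = (\<Sum>(w, C)\<in>W \<times> CB. log 2 (card {w'\<in>W. w' m = w m \<and> C w' = C w})) / card (W \<times> CB)"
    using W CB fiber
    by (subst cond_entropy_pmf_of_set) (auto simp: inj_on_def intro!: sum.cong)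
  finally show ?thesis .
qed

lemma binning_entropy_le:
  assumes R: "\<forall>i\<in>{1..M}. R i \<ge> 0" and \<epsilon>: "\<epsilon> \<ge> 0" and m: "m \<in> {1..M}"
  shows "binning_entropy M R \<epsilon> n m \<le> real M + 1 + real n * (ord_stat M R M - R m + \<epsilon>)"
proof -
  define W where "W = msg_set M R n"
  define B where "B = num_bins M R \<epsilon> n"
  define CB where "CB = codebooks M R \<epsilon> n"
  define F where "F = (\<Prod>i\<in>{1..M} - {m}. alph_size R n i)"
  define E where "E = real n * (ord_stat M R M - R m + \<epsilon>)"
  have W: "finite W" "W \<noteq> {}"
    unfolding W_def by (rule finite_msg_set, rule msg_set_nonempty)
  have B: "B > 0"
    unfolding B_def by (rule num_bins_pos)
  have CB: "CB = balanced_maps W B" "finite CB" "CB \<noteq> {}"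
    unfolding CB_def W_def B_def codebooks_eq_balanced_maps
    by (rule refl, rule finite_balanced_maps[OF finite_msg_set],
        rule balanced_maps_nonempty[OF finite_msg_set num_bins_pos])
  let ?f = "\<lambda>(w, C). real (card {w'\<in>W. w' m = w m \<and> C w' = C w})"
  have "sum ?f (W \<times> CB) \<le> real (card W) * real (card CB) * (1 + 2 * F / B)"
    using sum_card_bin_fiber_le[OF W(1) B, of "\<lambda>w. w m" F] card_msg_set_fiber_le[OF m]
    by (simp add: CB(1) W_def F_def)
  then have mean: "sum ?f (W \<times> CB) / card (W \<times> CB) \<le> 1 + 2 * F / B"
    using W CB by (simp add: card_cartesian_product divide_le_eq card_gt_0_iff mult_ac)
  have f_pos: "?f x > 0" if "x \<in> W \<times> CB" for x
    using that W(1) by (auto simp: card_gt_0_iff)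
  have "binning_entropy M R \<epsilon> n m \<le> log 2 (1 + 2 * F / B)"
    using mean_log_le_log[of "W \<times> CB" ?f, OF _ _ f_pos mean] W CB
    by (simp add: binning_entropy_eq_mean_log W_def CB_def case_prod_beta')
  also have "\<dots> \<le> log 2 (2 powr (real M + 1 + E))"
  proof -
    have "2 * F / B \<le> 2 * (2 powr (real M - 1) * 2 powr (real n * (R_key M R + ord_stat M R M - R m)))
        / 2 powr (real n * (R_key M R - \<epsilon>))"
      using prod_alph_size_le[OF m R, of n] num_bins_ge[of n M R \<epsilon>]
      by (intro frac_le) (auto simp: F_def B_def)
    also have "\<dots> = 2 powr (1 + (real M - 1) + real n * (R_key M R + ord_stat M R M - R m)
        - real n * (R_key M R - \<epsilon>))"
      by (simp only: powr_add powr_diff powr_one)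
    also have "\<dots> = 2 powr (real M + E)"
      by (simp add: E_def algebra_simps)
    finally have "2 * F / B \<le> 2 powr (real M + E)" .
    moreover have "E \<ge> 0"
      using le_ord_stat_max[OF m, of R] \<epsilon> by (simp add: E_def)
    then have "1 \<le> 2 powr (real M + E)"
      by (intro ge_one_powr_ge_zero) auto
    moreover have "2 powr (real M + 1 + E) = 2 * 2 powr (real M + E)"
      by (simp add: powr_add)
    ultimately have "1 + 2 * F / B \<le> 2 powr (real M + 1 + E)"
      by linarith
    moreover have "0 < 1 + 2 * F / B"
      by (simp add: add_pos_nonneg)
    ultimately show ?thesis
      by (subst log_le_cancel_iff) auto
  qed
  also have "\<dots> = real M + 1 + E"
    by simp
  finally show ?thesis
    by (simp add: E_def)
qed

theorem lemma1:
  fixes M :: nat and R :: "nat \<Rightarrow> real"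
  assumes "M \<ge> 2"
    and "\<forall>i\<in>{1..M}. R i > 0"
  shows "\<exists>\<delta> :: real \<Rightarrow> real. (\<delta> \<longlongrightarrow> 0) (at_right 0) \<and>
           (\<forall>\<epsilon>>0. \<forall>m\<in>{1..M}. \<forall>\<^sub>F n in sequentially.
              binning_entropy M R \<epsilon> n m \<le> real n * (ord_stat M R M - R m + \<delta> \<epsilon>))"
proof (intro exI[of _ "\<lambda>\<epsilon>. 2 * \<epsilon>"] conjI allI impI ballI)
  show "((\<lambda>\<epsilon>::real. 2 * \<epsilon>) \<longlongrightarrow> 0) (at_right 0)"
    by real_asymp
next
  fix \<epsilon> :: real and m
  assume \<epsilon>: "\<epsilon> > 0" and m: "m \<in> {1..M}"
  have bound: "binning_entropy M R \<epsilon> n m \<le> real M + 1 + real n * (ord_stat M R M - R m + \<epsilon>)" for n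
    using assms(2) \<epsilon> m by (intro binning_entropy_le) auto
  have "\<forall>\<^sub>F n in sequentially. real M + 1 \<le> real n * \<epsilon>"
    using \<epsilon> by real_asymp
  then show "\<forall>\<^sub>F n in sequentially. binning_entropy M R \<epsilon> n m \<le> real n * (ord_stat M R M - R m + 2 * \<epsilon>)"
  proof (rule eventually_mono)
    fix n
    assume "real M + 1 \<le> real n * \<epsilon>"
    then show "binning_entropy M R \<epsilon> n m \<le> real n * (ord_stat M R M - R m + 2 * \<epsilon>)"
      using bound[of n] by (simp add: algebra_simps)
  qed
qed

end
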